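(* Let $c>0$ be a constant, let $b_0\in(\pi/2,\pi)$ be the smallest positive solution of $cb+\tan b=0$, set $\alpha_0=1/|\cos b_0|$, and let $\alpha>\alpha_0$. Then the stationary system $$(c\bar u)'=\frac{\alpha\bar v}{1+\bar u+\bar v}-\bar u,\qquad -(c\bar v)'=\frac{\alpha\bar u}{1+\bar u+\bar v}-\bar v\quad\text{on }[0,1],$$ with boundary conditions $\bar u(0)=0$, $\bar v(1)=0$, has a nontrivial solution.
   Context: This is the stationary version of the system $\partial_t u+\partial_x(cu)=\frac{\alpha v}{1+u+v}-u$, $\partial_t v-\partial_x(cv)=\frac{\alpha u}{1+u+v}-v$ with Dirichlet-type boundary conditions (DBC) $u(0,t)=0$, $v(1,t)=0$. *)

theory Defs
  imports Complex_Main
begin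

end

theory Submission
  imports Defs "HOL-Analysis.Analysis"
begin

(* In the coordinates w = u + v and z = u - v the system becomes
     c w' = - z (w + 1 + \<alpha>) / (1 + w),      c z' = w (\<alpha> - 1 - w) / (1 + w),
   so F w + z\<^sup>2/2 is a first integral, where F' w = w (\<alpha> - 1 - w) / (w + 1 + \<alpha>).
   The boundary conditions ask for an orbit running from (w,z) = (m,-m) to (m,m); on the
   level set F w + z\<^sup>2/2 = E m := m\<^sup>2/2 + F m it takes the time T m, an integral over
   s = z/m \<in> [-1,1].  For small m the orbit is close to that of the linearisation, a
   rotation, and T m stays below a bound that tends to
     2 c arcsin (sqrt ((\<alpha> + 1) / (2 \<alpha>))) / sqrt (\<alpha>\<^sup>2 - 1),
   which is < 1 when \<alpha> > 1/|cos b0|.  As the orbit approaches the equilibrium w = \<alpha> - 1,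
   T m grows like a logarithm.  The intermediate value theorem gives an m with T m = 1, and
   inverting the time map along that orbit yields the solution. *)

lemma has_integral_inverse_sqrt_diff_square:
  fixes \<beta> :: real
  assumes "\<beta> > 1"
  shows "((\<lambda>s. 1 / sqrt (\<beta>\<^sup>2 - s\<^sup>2)) has_integral 2 * arcsin (1 / \<beta>)) {-1..1}"
proof -
  have "((\<lambda>s. 1 / sqrt (\<beta>\<^sup>2 - s\<^sup>2)) has_integral arcsin (1 / \<beta>) - arcsin (-1 / \<beta>)) {-1..1}"
  proof (rule fundamental_theorem_of_calculus)
    fix x :: real
    assume "x \<in> {-1..1}"
    then have x: "-1 \<le> x" "x \<le> 1" by auto
    have xb: "-1 < x / \<beta>" "x / \<beta> < 1"
      using x assms by (auto simp: divide_simps)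
    have "((\<lambda>s. s / \<beta>) has_real_derivative 1 / \<beta>) (at x)"
      using assms by (auto intro!: derivative_eq_intros)
    from DERIV_chain2[OF DERIV_arcsin[OF xb] this]
    have "((\<lambda>s. arcsin (s / \<beta>)) has_real_derivative
            inverse (sqrt (1 - (x / \<beta>)\<^sup>2)) * (1 / \<beta>)) (at x)" .
    moreover have "sqrt (1 - (x / \<beta>)\<^sup>2) * \<beta> = sqrt (\<beta>\<^sup>2 - x\<^sup>2)"
    proof -
      have "sqrt (1 - (x / \<beta>)\<^sup>2) * \<beta> = sqrt ((1 - (x / \<beta>)\<^sup>2) * \<beta>\<^sup>2)"
        using assms by (simp add: real_sqrt_mult)
      also have "(1 - (x / \<beta>)\<^sup>2) * \<beta>\<^sup>2 = \<beta>\<^sup>2 - x\<^sup>2"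
        using assms by (simp add: field_simps)
      finally show ?thesis .
    qed
    ultimately have "((\<lambda>s. arcsin (s / \<beta>)) has_real_derivative 1 / sqrt (\<beta>\<^sup>2 - x\<^sup>2)) (at x)"
      by (simp add: divide_inverse mult.commute flip: inverse_mult_distrib)
    then show "((\<lambda>s. arcsin (s / \<beta>)) has_vector_derivative 1 / sqrt (\<beta>\<^sup>2 - x\<^sup>2))
                 (at x within {-1..1})"
      by (simp add: has_field_derivative_at_within flip: has_real_derivative_iff_has_vector_derivative)
  qed simp
  moreover have "arcsin (-1 / \<beta>) = - arcsin (1 / \<beta>)"
  proof -
    have "0 < 1 / \<beta>" "1 / \<beta> \<le> 1" using assms by auto
    then have "arcsin (- (1 / \<beta>)) = - arcsin (1 / \<beta>)"
      by (intro arcsin_minus) linarith+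
    then show ?thesis by simp
  qed
  ultimately show ?thesis by simp
qed

lemma strict_mono_on_DERIV_pos:
  fixes f :: "real \<Rightarrow> real"
  assumes cont: "continuous_on {p..q} f"
    and deriv: "\<And>x. p < x \<Longrightarrow> x < q \<Longrightarrow> \<exists>d. (f has_real_derivative d) (at x) \<and> d > 0"
  shows "strict_mono_on {p..q} f"
proof (rule strict_mono_onI)
  fix x y
  assume "x \<in> {p..q}" "y \<in> {p..q}" "x < y"
  then show "f x < f y"
    using deriv by (intro DERIV_pos_imp_increasing_open[OF \<open>x < y\<close>] continuous_on_subset[OF cont]) auto
qed

lemma DERIV_integral_interior:
  fixes g :: "real \<Rightarrow> real"
  assumes "continuous_on {p..q} g" "t \<in> {p<..<q}"
  shows "((\<lambda>t. integral {p..t} g) has_real_derivative g t) (at t)"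
proof -
  have "((\<lambda>t. integral {p..t} g) has_real_derivative g t) (at t within {p<..<q})"
    using assms by (intro DERIV_subset[OF integral_has_real_derivative[OF assms(1)]]) auto
  then show ?thesis using at_within_open[OF assms(2) open_greaterThanLessThan] by simp
qed

context
  fixes f :: "real \<Rightarrow> real" and p q :: real
  assumes le: "p \<le> q"
    and cont: "continuous_on {p..q} f"
    and incr: "strict_mono_on {p..q} f"
begin

lemma strict_mono_on_image_interval: "f ` {p..q} = {f p..f q}"
proof
  show "f ` {p..q} \<subseteq> {f p..f q}"
  proof
    fix y
    assume "y \<in> f ` {p..q}"
    then obtain x where "x \<in> {p..q}" "y = f x" by blast
    then show "y \<in> {f p..f q}"
      using strict_mono_on_leD[OF incr, of p x] strict_mono_on_leD[OF incr, of x q] le by auto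
  qed
  show "{f p..f q} \<subseteq> f ` {p..q}"
  proof
    fix y
    assume "y \<in> {f p..f q}"
    then obtain x where "p \<le> x" "x \<le> q" "f x = y"
      using IVT'[of f p y q, OF _ _ le cont] by auto
    then show "y \<in> f ` {p..q}" by auto
  qed
qed

lemma continuous_on_the_inv_into_interval:
  "continuous_on {f p..f q} (the_inv_into {p..q} f)"
  using continuous_on_inv[OF cont compact_Icc, of "the_inv_into {p..q} f"]
    the_inv_into_f_f[OF strict_mono_on_imp_inj_on[OF incr]]
  by (simp add: strict_mono_on_image_interval)

lemma the_inv_into_interval:
  assumes "y \<in> {f p..f q}"
  shows "the_inv_into {p..q} f y \<in> {p..q}" "f (the_inv_into {p..q} f y) = y"
  using assms strict_mono_on_imp_inj_on[OF incr] strict_mono_on_image_interval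
  by (metis the_inv_into_into order_refl, metis f_the_inv_into_f)

lemma strict_mono_on_the_inv_into_interval:
  "strict_mono_on {f p..f q} (the_inv_into {p..q} f)"
proof (rule strict_mono_onI)
  fix y y'
  assume "y \<in> {f p..f q}" "y' \<in> {f p..f q}" "y < y'"
  then show "the_inv_into {p..q} f y < the_inv_into {p..q} f y'"
    using the_inv_into_interval[of y] the_inv_into_interval[of y']
      strict_mono_on_less[OF incr, of "the_inv_into {p..q} f y" "the_inv_into {p..q} f y'"]
    by simp
qed

lemma DERIV_the_inv_into_interval:
  assumes "f p < y" "y < f q"
    and "(f has_real_derivative D) (at (the_inv_into {p..q} f y))" "D \<noteq> 0"
  shows "(the_inv_into {p..q} f has_real_derivative inverse D) (at y)"
proof (rule DERIV_inverse_function[where f = f and g = "the_inv_into {p..q} f", OF assms(3,4,1,2)])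
  show "\<And>y'. f p < y' \<Longrightarrow> y' < f q \<Longrightarrow> f (the_inv_into {p..q} f y') = y'"
    using the_inv_into_interval by simp
  show "isCont (the_inv_into {p..q} f) y"
    using assms continuous_on_the_inv_into_interval
    by (intro continuous_on_interior[of "{f p..f q}"]) auto
qed

end

(* The primitive is taken on [-\<rho>, \<rho>] rather than [-1, 1] so that its inverse is
   differentiable also at the endpoints 0 and 1. *)

lemma inverse_of_primitive:
  fixes g :: "real \<Rightarrow> real"
  assumes \<rho>: "1 < \<rho>" and cont: "continuous_on {-\<rho>..\<rho>} g"
    and pos: "\<And>s. s \<in> {-\<rho>..\<rho>} \<Longrightarrow> 0 < g s" and total: "integral {-1..1} g = 1"
  obtains \<sigma> where "\<sigma> 0 = -1" "\<sigma> 1 = 1" "\<And>x. x \<in> {0..1} \<Longrightarrow> \<sigma> x \<in> {-\<rho><..<\<rho>}"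
    "\<And>x. x \<in> {0..1} \<Longrightarrow> (\<sigma> has_real_derivative inverse (g (\<sigma> x))) (at x)"
proof -
  define \<tau> where "\<tau> t = integral {-\<rho>..t} g - integral {-\<rho>..-1} g" for t
  have \<tau>_deriv: "(\<tau> has_real_derivative g t) (at t)" if "t \<in> {-\<rho><..<\<rho>}" for t
    using DERIV_diff[OF DERIV_integral_interior[OF cont that] DERIV_const]
    unfolding \<tau>_def[abs_def] by simp
  have \<tau>_cont: "continuous_on {-\<rho>..\<rho>} \<tau>"
    unfolding \<tau>_def[abs_def] using cont
    by (intro continuous_intros indefinite_integral_continuous_1 integrable_continuous_real)
  have \<tau>_incr: "strict_mono_on {-\<rho>..\<rho>} \<tau>"
  proof (rule strict_mono_on_DERIV_pos[OF \<tau>_cont])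
    fix t
    assume "-\<rho> < t" "t < \<rho>"
    then have "(\<tau> has_real_derivative g t) (at t)" "g t > 0"
      using \<tau>_deriv pos[of t] by auto
    then show "\<exists>d. (\<tau> has_real_derivative d) (at t) \<and> d > 0" by blast
  qed
  have \<tau>_m1: "\<tau> (-1) = 0" unfolding \<tau>_def by simp
  have \<tau>_1: "\<tau> 1 = 1"
  proof -
    have "g integrable_on {-\<rho>..1}"
      using \<rho> by (intro integrable_continuous_real continuous_on_subset[OF cont]) auto
    then have "integral {-\<rho>..-1} g + integral {-1..1} g = integral {-\<rho>..1} g"
      using \<rho> by (intro Henstock_Kurzweil_Integration.integral_combine) auto
    then show ?thesis using total unfolding \<tau>_def by simp
  qed
  have \<tau>_ends: "\<tau> (-\<rho>) < 0" "1 < \<tau> \<rho>"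
    using strict_mono_onD[OF \<tau>_incr, of "-\<rho>" "-1"] strict_mono_onD[OF \<tau>_incr, of 1 \<rho>] \<rho> \<tau>_m1 \<tau>_1
    by auto
  define \<sigma> where "\<sigma> = the_inv_into {-\<rho>..\<rho>} \<tau>"
  have \<sigma>_\<tau>: "\<sigma> (\<tau> t) = t" if "t \<in> {-\<rho>..\<rho>}" for t
    unfolding \<sigma>_def using strict_mono_on_imp_inj_on[OF \<tau>_incr] that by (simp add: the_inv_into_f_f)
  show thesis
  proof (rule that)
    show "\<sigma> 0 = -1" "\<sigma> 1 = 1"
      using \<sigma>_\<tau>[of "-1"] \<sigma>_\<tau>[of 1] \<tau>_m1 \<tau>_1 \<rho> by auto
    fix x :: real
    assume "x \<in> {0..1}"
    then have x: "\<tau> (-\<rho>) < x" "x < \<tau> \<rho>" using \<tau>_ends by auto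
    then have "\<sigma> x \<in> {-\<rho>..\<rho>}" "\<tau> (\<sigma> x) = x"
      using the_inv_into_interval[OF _ \<tau>_cont \<tau>_incr, of x] \<rho> unfolding \<sigma>_def by auto
    with x show s: "\<sigma> x \<in> {-\<rho><..<\<rho>}"
      by (cases "\<sigma> x = -\<rho> \<or> \<sigma> x = \<rho>") auto
    have "(\<tau> has_real_derivative g (\<sigma> x)) (at (\<sigma> x))" "g (\<sigma> x) \<noteq> 0"
      using \<tau>_deriv[OF s] pos[of "\<sigma> x"] s by auto
    then show "(\<sigma> has_real_derivative inverse (g (\<sigma> x))) (at x)"
      using DERIV_the_inv_into_interval[OF _ \<tau>_cont \<tau>_incr x] \<rho> unfolding \<sigma>_def by simp
  qed
qed

lemma system_from_sum_difference:
  fixes w z :: "real \<Rightarrow> real" and a c :: real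
  assumes dw: "(w has_real_derivative w') (at x)" and dz: "(z has_real_derivative z') (at x)"
    and nz: "1 + w x \<noteq> 0"
    and w': "c * w' = - z x * (w x + 1 + a) / (1 + w x)"
    and z': "c * z' = w x * (a - 1 - w x) / (1 + w x)"
  defines "u \<equiv> \<lambda>t. (w t + z t) / 2" and "v \<equiv> \<lambda>t. (w t - z t) / 2"
  shows "((\<lambda>y. c * u y) has_real_derivative a * v x / (1 + u x + v x) - u x) (at x)"
    and "((\<lambda>y. - (c * v y)) has_real_derivative a * u x / (1 + u x + v x) - v x) (at x)"
proof -
  have sum: "1 + u x + v x = 1 + w x"
    unfolding u_def v_def by (simp add: field_simps)
  have "c * ((w' + z') / 2) = a * v x / (1 + u x + v x) - u x"
    unfolding sum using nz w' z' by (simp add: u_def v_def field_simps)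
  moreover have "- (c * ((w' - z') / 2)) = a * u x / (1 + u x + v x) - v x"
    unfolding sum using nz w' z' by (simp add: u_def v_def field_simps)
  ultimately show "((\<lambda>y. c * u y) has_real_derivative a * v x / (1 + u x + v x) - u x) (at x)"
    and "((\<lambda>y. - (c * v y)) has_real_derivative a * u x / (1 + u x + v x) - v x) (at x)"
    unfolding u_def v_def by (auto intro!: derivative_eq_intros dw dz)
qed

locale stationary_system =
  fixes a c :: real
  assumes a_gt_1: "a > 1" and c_pos: "c > 0"
begin

definition F :: "real \<Rightarrow> real" where
  "F w = - w\<^sup>2 / 2 + 2 * a * w - 2 * a * (1 + a) * ln ((w + 1 + a) / (1 + a))"

definition F' :: "real \<Rightarrow> real" where
  "F' w = w * (a - 1 - w) / (w + 1 + a)"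

lemma F_deriv:
  assumes "w > - (1 + a)"
  shows "(F has_real_derivative F' w) (at w)"
  unfolding F_def[abs_def] F'_def using assms a_gt_1
  by (auto intro!: derivative_eq_intros simp: divide_simps) (simp add: algebra_simps)

lemma F_0 [simp]: "F 0 = 0"
  unfolding F_def using a_gt_1 by simp

lemma isCont_F: "w > - (1 + a) \<Longrightarrow> isCont F w"
  using F_deriv DERIV_isCont by blast

lemma continuous_on_F: "continuous_on {0..a - 1} F"
  using a_gt_1 by (intro continuous_at_imp_continuous_on ballI isCont_F) auto

lemma strict_mono_on_F: "strict_mono_on {0..a - 1} F"
proof (rule strict_mono_on_DERIV_pos[OF continuous_on_F])
  fix t
  assume "0 < t" "t < a - 1"
  then have "F' t > 0" "(F has_real_derivative F' t) (at t)"
    using a_gt_1 F_deriv[of t] by (auto simp: F'_def intro!: divide_pos_pos)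
  then show "\<exists>d. (F has_real_derivative d) (at t) \<and> d > 0" by blast
qed

lemma F_pos: "0 < w \<Longrightarrow> w \<le> a - 1 \<Longrightarrow> F w > 0"
  using strict_mono_onD[OF strict_mono_on_F, of 0 w] by simp

definition k_upper :: real where "k_upper = (a - 1) / (2 * (1 + a))"

definition k_lower :: "real \<Rightarrow> real" where "k_lower W = (a - 1 - W) / (2 * (1 + a + W))"

(* For 0 \<le> w \<le> W, F' w lies between w (a - 1 - W) / (1 + a + W) and w (a - 1) / (1 + a);
   integrating gives the two quadratic bounds on F. *)

lemma F_le_quadratic:
  assumes "0 \<le> w"
  shows "F w \<le> k_upper * w\<^sup>2"
proof -
  have "(\<lambda>t. k_upper * t\<^sup>2 - F t) 0 \<le> (\<lambda>t. k_upper * t\<^sup>2 - F t) w"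
  proof (rule DERIV_nonneg_imp_nondecreasing[OF assms])
    fix t
    assume t: "0 \<le> t" "t \<le> w"
    have "t * (a - 1 - t) / (t + 1 + a) \<le> t * (a - 1) / (t + 1 + a)"
      using t a_gt_1 by (intro divide_right_mono mult_left_mono) auto
    also have "\<dots> \<le> t * (a - 1) / (1 + a)"
      using t a_gt_1 by (intro divide_left_mono) auto
    also have "\<dots> = k_upper * (2 * t)"
      unfolding k_upper_def using a_gt_1 by (simp add: field_simps)
    finally have "F' t \<le> k_upper * (2 * t)" unfolding F'_def .
    moreover have "((\<lambda>t. k_upper * t\<^sup>2 - F t) has_real_derivative k_upper * (2 * t) - F' t) (at t)"
      using t a_gt_1 by (auto intro!: derivative_eq_intros F_deriv)
    ultimately show "\<exists>y. ((\<lambda>t. k_upper * t\<^sup>2 - F t) has_real_derivative y) (at t) \<and> 0 \<le> y"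
      by auto
  qed
  then show ?thesis by simp
qed

lemma F_ge_quadratic:
  assumes "0 \<le> w" "w \<le> W" "W < a - 1"
  shows "k_lower W * w\<^sup>2 \<le> F w"
proof -
  have "(\<lambda>t. F t - k_lower W * t\<^sup>2) 0 \<le> (\<lambda>t. F t - k_lower W * t\<^sup>2) w"
  proof (rule DERIV_nonneg_imp_nondecreasing[OF assms(1)])
    fix t
    assume t: "0 \<le> t" "t \<le> w"
    have "(a - 1 - W) * (t + 1 + a) \<le> (a - 1 - t) * (1 + a + W)"
    proof -
      have "(a - 1 - t) * (1 + a + W) - (a - 1 - W) * (t + 1 + a) = (W - t) * (2 * a)"
        by (simp add: algebra_simps)
      then show ?thesis using t assms a_gt_1 by (smt (verit) mult_nonneg_nonneg)
    qed
    then have "(a - 1 - W) / (1 + a + W) \<le> (a - 1 - t) / (t + 1 + a)"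
      using t assms a_gt_1 by (simp add: divide_simps)
    then have "k_lower W * (2 * t) \<le> F' t"
      using t assms a_gt_1 mult_left_mono[of _ _ t]
      by (simp add: k_lower_def F'_def field_simps)
    moreover have "((\<lambda>t. F t - k_lower W * t\<^sup>2) has_real_derivative F' t - k_lower W * (2 * t)) (at t)"
      using t a_gt_1 by (auto intro!: derivative_eq_intros F_deriv)
    ultimately show "\<exists>y. ((\<lambda>t. F t - k_lower W * t\<^sup>2) has_real_derivative y) (at t) \<and> 0 \<le> y"
      by auto
  qed
  then show ?thesis by simp
qed

definition Fmax :: real where "Fmax = F (a - 1)"

lemma F_gap_below_top:
  assumes "0 < l" "l \<le> w" "w \<le> a - 1"
  shows "l / (4 * a) * (a - 1 - w)\<^sup>2 \<le> Fmax - F w"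
proof -
  let ?D = "\<lambda>t. F t + l / (4 * a) * (a - 1 - t)\<^sup>2"
  have "?D w \<le> ?D (a - 1)"
  proof (rule DERIV_nonneg_imp_nondecreasing[OF assms(3)])
    fix t
    assume t: "w \<le> t" "t \<le> a - 1"
    have "l * (t + 1 + a) \<le> t * (2 * a)"
      using t assms a_gt_1 by (intro mult_mono) auto
    then have "l / (2 * a) \<le> t / (t + 1 + a)"
      using t assms a_gt_1 by (simp add: divide_simps)
    then have "(a - 1 - t) * (l / (2 * a)) \<le> (a - 1 - t) * (t / (t + 1 + a))"
      using t by (intro mult_left_mono) auto
    moreover have "l / (4 * a) * (2 * (a - 1 - t) * (- 1)) = - ((a - 1 - t) * (l / (2 * a)))"
      using a_gt_1 by (simp add: field_simps)
    moreover have "F' t = (a - 1 - t) * (t / (t + 1 + a))"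
      by (simp add: F'_def)
    ultimately have "0 \<le> F' t + l / (4 * a) * (2 * (a - 1 - t) * (- 1))"
      by linarith
    moreover have "(?D has_real_derivative F' t + l / (4 * a) * (2 * (a - 1 - t) * (- 1))) (at t)"
      using t assms a_gt_1 by (auto intro!: derivative_eq_intros F_deriv)
    ultimately show "\<exists>y. (?D has_real_derivative y) (at t) \<and> 0 \<le> y" by blast
  qed
  then show ?thesis unfolding Fmax_def by simp
qed

definition Finv :: "real \<Rightarrow> real" where "Finv = the_inv_into {0..a - 1} F"

lemma Fmax_pos: "Fmax > 0"
  unfolding Fmax_def using F_pos a_gt_1 by simp

lemma F_lt_Fmax: "0 \<le> w \<Longrightarrow> w < a - 1 \<Longrightarrow> F w < Fmax"
  unfolding Fmax_def using strict_mono_onD[OF strict_mono_on_F, of w "a - 1"] by simp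

lemmas Finv_interval = the_inv_into_interval[OF _ continuous_on_F strict_mono_on_F,
    unfolded F_0 Fmax_def[symmetric] Finv_def[symmetric]]

lemma Finv_F: "w \<in> {0..a - 1} \<Longrightarrow> Finv (F w) = w"
  unfolding Finv_def using strict_mono_on_imp_inj_on[OF strict_mono_on_F]
  by (simp add: the_inv_into_f_f)

lemma Finv_bounds:
  assumes "0 < y" "y < Fmax"
  shows "0 < Finv y" "Finv y < a - 1" "F (Finv y) = y"
proof -
  have y: "y \<in> {0..Fmax}" using assms by auto
  with Finv_interval[OF _ y] assms show "0 < Finv y" "Finv y < a - 1" "F (Finv y) = y"
    using a_gt_1 unfolding Fmax_def by (auto simp: less_le)
qed

lemma strict_mono_on_Finv: "strict_mono_on {0..Fmax} Finv"
  using strict_mono_on_the_inv_into_interval[OF _ continuous_on_F strict_mono_on_F] a_gt_1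
  by (simp add: Fmax_def Finv_def)

lemma continuous_on_Finv: "continuous_on {0..Fmax} Finv"
  using continuous_on_the_inv_into_interval[OF _ continuous_on_F strict_mono_on_F] a_gt_1
  by (simp add: Fmax_def Finv_def)

lemma Finv_deriv:
  assumes "0 < y" "y < Fmax"
  shows "(Finv has_real_derivative inverse (F' (Finv y))) (at y)"
proof -
  have "(F has_real_derivative F' (Finv y)) (at (Finv y))" "F' (Finv y) \<noteq> 0"
    using Finv_bounds[OF assms] a_gt_1 F_deriv[of "Finv y"] by (auto simp: F'_def)
  with assms a_gt_1 show ?thesis
    using DERIV_the_inv_into_interval[OF _ continuous_on_F strict_mono_on_F, of y]
    unfolding Finv_def[symmetric] Fmax_def by simp
qed

(* The orbit through (w, z) = (m, -m) is the level set F w + z\<^sup>2/2 = E m.  Parametrised by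
   z = m s, its w-coordinate is W m s, and Q m s = dx/ds is read off from
   c z' = w (a - 1 - w) / (1 + w). *)

definition E :: "real \<Rightarrow> real" where "E m = m\<^sup>2 / 2 + F m"

definition Y :: "real \<Rightarrow> real \<Rightarrow> real" where "Y m s = E m - m\<^sup>2 * s\<^sup>2 / 2"

definition W :: "real \<Rightarrow> real \<Rightarrow> real" where "W m s = Finv (Y m s)"

definition Q :: "real \<Rightarrow> real \<Rightarrow> real" where
  "Q m s = m * c * (1 + W m s) / ((a - 1 - W m s) * W m s)"

definition T :: "real \<Rightarrow> real" where "T m = integral {-1..1} (Q m)"

lemma E_0 [simp]: "E 0 = 0"
  unfolding E_def by simp

lemma strict_mono_on_E: "strict_mono_on {0..a - 1} E"
proof (rule strict_mono_onI)
  fix x y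
  assume "x \<in> {0..a - 1}" "y \<in> {0..a - 1}" "x < y"
  moreover have "x\<^sup>2 < y\<^sup>2"
    using calculation by (intro power_strict_mono) auto
  ultimately show "E x < E y"
    unfolding E_def using strict_mono_onD[OF strict_mono_on_F] by fastforce
qed

lemma isCont_E: "m > - (1 + a) \<Longrightarrow> isCont E m"
  unfolding E_def[abs_def] by (intro continuous_intros isCont_F) auto

lemma E_reaches_Fmax: "\<exists>ms. 0 < ms \<and> ms < a - 1 \<and> E ms = Fmax"
proof -
  have "continuous_on {0..a - 1} E"
    using a_gt_1 by (intro continuous_at_imp_continuous_on ballI isCont_E) auto
  moreover have "E (a - 1) > Fmax"
    unfolding E_def Fmax_def using a_gt_1 by simp
  ultimately obtain ms where "0 \<le> ms" "ms \<le> a - 1" "E ms = Fmax"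
    using IVT'[of E 0 Fmax "a - 1"] Fmax_pos a_gt_1 by auto
  moreover have "ms \<noteq> 0" "ms \<noteq> a - 1"
    using calculation Fmax_pos \<open>E (a - 1) > Fmax\<close> by auto
  ultimately show ?thesis by (intro exI[of _ ms]) auto
qed

lemma W_bounds:
  assumes "0 < Y m s" "Y m s < Fmax"
  shows "0 < W m s" "W m s < a - 1" "F (W m s) = Y m s"
  unfolding W_def using Finv_bounds[OF assms] by auto

lemma Y_bounds:
  assumes "0 < m" "m < a - 1" "E m < Fmax" "\<bar>s\<bar> \<le> 1"
  shows "F m \<le> Y m s" "0 < Y m s" "Y m s < Fmax"
proof -
  have "s\<^sup>2 \<le> 1" using assms(4) abs_le_square_iff[of s 1] by simp
  then have "m\<^sup>2 * s\<^sup>2 \<le> m\<^sup>2" by (simp add: mult_left_le)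
  then show "F m \<le> Y m s" unfolding Y_def E_def by simp
  then show "0 < Y m s" using F_pos[of m] assms by simp
  have "0 \<le> m\<^sup>2 * s\<^sup>2" by simp
  then show "Y m s < Fmax" using assms unfolding Y_def by linarith
qed

lemma W_ge:
  assumes "0 < m" "m < a - 1" "E m < Fmax" "\<bar>s\<bar> \<le> 1"
  shows "m \<le> W m s"
proof -
  have "Finv (F m) \<le> Finv (Y m s)"
    using Y_bounds[OF assms] F_pos[of m] assms
    by (intro strict_mono_on_leD[OF strict_mono_on_Finv]) auto
  then show ?thesis unfolding W_def using Finv_F[of m] assms by simp
qed

lemma Q_pos: "0 < m \<Longrightarrow> 0 < Y m s \<Longrightarrow> Y m s < Fmax \<Longrightarrow> Q m s > 0"
  unfolding Q_def using W_bounds[of m s] c_pos by (auto intro!: divide_pos_pos mult_pos_pos)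

lemma continuous_on_Q:
  assumes S: "\<And>p. p \<in> S \<Longrightarrow> 0 < fst p \<and> 0 < Y (fst p) (snd p) \<and> Y (fst p) (snd p) < Fmax"
  shows "continuous_on S (\<lambda>(m, s). Q m s)"
proof -
  have "continuous_on S (\<lambda>p. E (fst p))"
  proof (intro continuous_at_imp_continuous_on ballI)
    fix p
    assume "p \<in> S"
    then have "isCont E (fst p)" using S[of p] a_gt_1 by (intro isCont_E) linarith
    then show "isCont (\<lambda>p. E (fst p)) p" by (intro isCont_o2[OF isCont_fst]) auto
  qed
  then have "continuous_on S (\<lambda>p. Y (fst p) (snd p))"
    unfolding Y_def by (intro continuous_intros) auto
  moreover have "(\<lambda>p. Y (fst p) (snd p)) ` S \<subseteq> {0..Fmax}"
    using S by fastforce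
  ultimately have "continuous_on S (\<lambda>p. W (fst p) (snd p))"
    unfolding W_def by (rule continuous_on_compose2[OF continuous_on_Finv])
  moreover have "\<forall>p\<in>S. (a - 1 - W (fst p) (snd p)) * W (fst p) (snd p) \<noteq> 0"
    using S W_bounds by fastforce
  ultimately show ?thesis
    unfolding Q_def case_prod_beta
    by (intro continuous_on_divide continuous_intros) auto
qed

lemma continuous_on_Q_slice:
  assumes "0 < m" "\<And>s. s \<in> S \<Longrightarrow> 0 < Y m s \<and> Y m s < Fmax"
  shows "continuous_on S (Q m)"
proof -
  have "continuous_on S ((\<lambda>(m, s). Q m s) \<circ> (\<lambda>s. (m, s)))"
    using assms by (intro continuous_on_compose continuous_intros continuous_on_Q) auto
  then show ?thesis by (simp add: o_def)
qed

lemma Q_integrable: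
  assumes "0 < m" "m < a - 1" "E m < Fmax"
  shows "Q m integrable_on {-1..1}"
  using assms Y_bounds by (intro integrable_continuous_real continuous_on_Q_slice) auto

lemma continuous_on_T:
  assumes "0 < m1" "m2 < a - 1" "E m2 < Fmax"
  shows "continuous_on {m1..m2} T"
proof -
  have "E m < Fmax" if "m \<in> {m1..m2}" for m
    using that assms strict_mono_on_leD[OF strict_mono_on_E, of m m2] by auto
  then have "continuous_on ({m1..m2} \<times> cbox (-1) 1) (\<lambda>(m, s). Q m s)"
    using assms Y_bounds by (intro continuous_on_Q) auto
  then show ?thesis
    unfolding T_def[abs_def] using integral_continuous_on_param by fastforce
qed

(* If the orbit stays below W0, the quadratic bounds on F trap it between two ellipses, so
   Q m s \<le> C / sqrt (\<beta>\<^sup>2 - s\<^sup>2); integrating the right-hand side gives T_bound W0. *)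

definition T_bound :: "real \<Rightarrow> real" where
  "T_bound W0 = c * (1 + W0) / (a - 1 - W0) * sqrt (2 * k_upper) * (2 * arcsin (1 / sqrt (1 + 2 * k_lower W0)))"

lemma W_le:
  assumes m: "0 < m" "m < a - 1" and W0: "0 < W0" "W0 < a - 1" "E m \<le> F W0"
    and s: "\<bar>s\<bar> \<le> 1"
  shows "W m s \<le> W0"
proof -
  have E_lt: "E m < Fmax" using W0 F_lt_Fmax[of W0] by simp
  have "0 \<le> m\<^sup>2 * s\<^sup>2" by simp
  then have "Y m s \<le> F W0" using W0 unfolding Y_def by linarith
  then have "Finv (Y m s) \<le> Finv (F W0)"
    using Y_bounds[OF m E_lt s] F_pos[of W0] F_lt_Fmax[of W0] W0
    by (intro strict_mono_on_leD[OF strict_mono_on_Finv]) auto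
  then show ?thesis
    unfolding W_def using Finv_F[of W0] W0 by simp
qed

lemma Q_le_inverse_sqrt:
  assumes m: "0 < m" "m < a - 1" and W0: "0 < W0" "W0 < a - 1" "E m \<le> F W0"
    and s: "\<bar>s\<bar> \<le> 1"
  shows "Q m s \<le> c * (1 + W0) / (a - 1 - W0) * sqrt (2 * k_upper) / sqrt (1 + 2 * k_lower W0 - s\<^sup>2)"
proof -
  have E_lt: "E m < Fmax" using W0 F_lt_Fmax[of W0] by simp
  have "m\<^sup>2 > 0" using m by simp
  then have "F m < F W0" using W0 unfolding E_def by linarith
  then have mW0: "m < W0"
    using m W0 strict_mono_on_leD[OF strict_mono_on_F, of W0 m] by fastforce
  define w where "w = W m s"
  have w: "m \<le> w" "w \<le> W0" "w < a - 1" "F w = Y m s"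
    using W_ge[OF m E_lt s] W_le[OF m W0 s] W_bounds Y_bounds[OF m E_lt s] unfolding w_def by auto
  define \<gamma> where "\<gamma> = 1 + 2 * k_lower W0 - s\<^sup>2"
  have "k_lower W0 > 0" unfolding k_lower_def using W0 by (auto intro!: divide_pos_pos)
  moreover have "s\<^sup>2 \<le> 1" using s abs_le_square_iff[of s 1] by simp
  ultimately have \<gamma>_pos: "\<gamma> > 0" unfolding \<gamma>_def by simp
  have "m\<^sup>2 * \<gamma> / 2 \<le> Y m s"
    using F_ge_quadratic[of m W0] mW0 m W0 unfolding \<gamma>_def Y_def E_def by (simp add: field_simps)
  also have "\<dots> \<le> k_upper * w\<^sup>2"
    using F_le_quadratic[of w] w m by simp
  finally have "m\<^sup>2 \<le> w\<^sup>2 * (2 * k_upper / \<gamma>)"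
    using \<gamma>_pos by (simp add: field_simps)
  then have "sqrt (m\<^sup>2) \<le> sqrt (w\<^sup>2 * (2 * k_upper / \<gamma>))"
    by (rule real_sqrt_le_mono)
  then have mw: "m / w \<le> sqrt (2 * k_upper) / sqrt \<gamma>"
    using m w \<gamma>_pos by (simp add: real_sqrt_mult real_sqrt_divide divide_simps mult.commute)
  have "(1 + w) / (a - 1 - w) \<le> (1 + W0) / (a - 1 - W0)"
    using w m W0 by (simp add: divide_simps) (smt (verit) mult_mono)
  then have "Q m s = c * ((1 + w) / (a - 1 - w)) * (m / w)"
    unfolding Q_def w_def by simp
  also have "\<dots> \<le> c * ((1 + W0) / (a - 1 - W0)) * (sqrt (2 * k_upper) / sqrt \<gamma>)"
    using \<open>(1 + w) / (a - 1 - w) \<le> _\<close> mw c_pos w m W0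
    by (intro mult_mono mult_left_mono) auto
  finally show ?thesis unfolding \<gamma>_def by simp
qed

lemma T_le_T_bound:
  assumes "0 < m" "m < a - 1" "0 < W0" "W0 < a - 1" "E m \<le> F W0"
  shows "T m \<le> T_bound W0"
proof -
  define \<beta> where "\<beta> = sqrt (1 + 2 * k_lower W0)"
  define C where "C = c * (1 + W0) / (a - 1 - W0) * sqrt (2 * k_upper)"
  have "k_lower W0 > 0" unfolding k_lower_def using assms by (auto intro!: divide_pos_pos)
  then have "\<beta> > 1" "\<beta>\<^sup>2 = 1 + 2 * k_lower W0" unfolding \<beta>_def by auto
  have E_lt: "E m < Fmax" using assms F_lt_Fmax[of W0] by simp
  have "T_bound W0 = C * (2 * arcsin (1 / \<beta>))"
    unfolding T_bound_def C_def \<beta>_def by simp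
  then have "((\<lambda>s. C * (1 / sqrt (\<beta>\<^sup>2 - s\<^sup>2))) has_integral T_bound W0) {-1..1}"
    using has_integral_mult_right[OF has_integral_inverse_sqrt_diff_square[OF \<open>\<beta> > 1\<close>]]
    by simp
  moreover have "Q m s \<le> C * (1 / sqrt (\<beta>\<^sup>2 - s\<^sup>2))" if "s \<in> {-1..1}" for s
    using Q_le_inverse_sqrt[of m W0 s] that assms unfolding C_def \<open>\<beta>\<^sup>2 = _\<close> by auto
  ultimately show ?thesis
    unfolding T_def
    using has_integral_le[OF integrable_integral[OF Q_integrable[OF assms(1,2) E_lt]]] by blast
qed

(* For s \<ge> 0 the distance a - 1 - W m s to the equilibrium is at most a multiple of
   sqrt (Fmax - E m) + m s, whose reciprocal has a logarithmic integral. *)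

lemma distance_to_equilibrium:
  assumes "0 < l" "l \<le> m" "m < a - 1" "E m < Fmax" "s \<in> {0..1}"
  shows "sqrt (l / (4 * a)) * (a - 1 - W m s) \<le> sqrt (Fmax - E m) + m * s"
proof -
  define d where "d = sqrt (Fmax - E m)"
  have m: "0 < m" and d: "d > 0" "d\<^sup>2 = Fmax - E m"
    using assms unfolding d_def by auto
  have s: "\<bar>s\<bar> \<le> 1" using assms by auto
  have w: "m \<le> W m s" "W m s < a - 1" "F (W m s) = Y m s"
    using W_ge[OF m assms(3,4) s] W_bounds Y_bounds[OF m assms(3,4) s] by auto
  have "l / (4 * a) * (a - 1 - W m s)\<^sup>2 \<le> Fmax - F (W m s)"
    using F_gap_below_top[of l "W m s"] assms w by simp
  also have "\<dots> = d\<^sup>2 + m\<^sup>2 * s\<^sup>2 / 2"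
    using w d unfolding Y_def by simp
  also have "\<dots> \<le> (d + m * s)\<^sup>2"
  proof -
    have "0 \<le> d * m * s" "0 \<le> m\<^sup>2 * s\<^sup>2" using d m assms by auto
    moreover have "(d + m * s)\<^sup>2 = d\<^sup>2 + 2 * (d * m * s) + m\<^sup>2 * s\<^sup>2"
      by (simp add: power2_eq_square algebra_simps)
    ultimately show ?thesis by linarith
  qed
  finally have "(sqrt (l / (4 * a)) * (a - 1 - W m s))\<^sup>2 \<le> (d + m * s)\<^sup>2"
    using assms a_gt_1 by (simp add: power_mult_distrib)
  moreover have "0 \<le> d + m * s" using d m assms by simp
  ultimately show ?thesis
    unfolding d_def by (rule power2_le_imp_le)
qed

lemma Q_ge_inverse_linear:
  assumes "0 < l" "l \<le> m" "m < a - 1" "E m < Fmax" "s \<in> {0..1}"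
  shows "c * sqrt (l / (4 * a)) * (m / (sqrt (Fmax - E m) + m * s)) \<le> Q m s"
proof -
  define \<kappa> where "\<kappa> = l / (4 * a)"
  define d where "d = sqrt (Fmax - E m)"
  define w where "w = W m s"
  have m: "0 < m" and \<kappa>: "\<kappa> > 0" and d: "d > 0"
    using assms a_gt_1 unfolding \<kappa>_def d_def by auto
  have w: "m \<le> w" "w < a - 1"
    using W_ge[OF m assms(3,4)] W_bounds Y_bounds[OF m assms(3,4)] assms unfolding w_def by auto
  have "sqrt \<kappa> * (a - 1 - w) \<le> d + m * s"
    using distance_to_equilibrium[OF assms] unfolding \<kappa>_def d_def w_def .
  then have "a - 1 - w \<le> (d + m * s) / sqrt \<kappa>"
    using \<kappa> by (simp add: pos_le_divide_eq mult.commute)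
  moreover have "0 < (d + m * s) / sqrt \<kappa> * (a - 1 - w)"
    using d m w \<kappa> assms by (intro mult_pos_pos divide_pos_pos add_pos_nonneg) auto
  ultimately have "m / ((d + m * s) / sqrt \<kappa>) \<le> m / (a - 1 - w)"
    using m by (intro divide_left_mono) auto
  also have "\<dots> \<le> m * (1 + w) / ((a - 1 - w) * w)"
    using m w by (simp add: divide_simps)
  finally have "sqrt \<kappa> * (m / (d + m * s)) \<le> m * (1 + w) / ((a - 1 - w) * w)"
    by (simp add: mult.commute)
  then have "c * (sqrt \<kappa> * (m / (d + m * s))) \<le> c * (m * (1 + w) / ((a - 1 - w) * w))"
    using c_pos by (intro mult_left_mono) auto
  then show ?thesis
    unfolding Q_def w_def[symmetric] \<kappa>_def[symmetric] d_def[symmetric] by (simp add: ac_simps)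
qed

lemma T_ge_log:
  assumes "0 < l" "l \<le> m" "m < a - 1" "E m < Fmax"
  shows "c * sqrt (l / (4 * a)) * (ln (sqrt (Fmax - E m) + m) - ln (sqrt (Fmax - E m))) \<le> T m"
proof -
  define L where "L = c * sqrt (l / (4 * a))"
  define d where "d = sqrt (Fmax - E m)"
  have m: "0 < m" and d: "d > 0"
    using assms unfolding d_def by auto
  have log_int: "((\<lambda>s. L * (m / (d + m * s))) has_integral
          (\<lambda>s. L * ln (d + m * s)) 1 - (\<lambda>s. L * ln (d + m * s)) 0) {0..1}"
  proof (rule fundamental_theorem_of_calculus)
    fix x :: real
    assume "x \<in> {0..1}"
    then have "d + m * x > 0" using d m by (simp add: add_pos_nonneg)
    then have "((\<lambda>s. L * ln (d + m * s)) has_real_derivative L * (m / (d + m * x))) (at x)"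
      by (auto intro!: derivative_eq_intros)
    then show "((\<lambda>s. L * ln (d + m * s)) has_vector_derivative L * (m / (d + m * x)))
                 (at x within {0..1})"
      by (simp add: has_field_derivative_at_within flip: has_real_derivative_iff_has_vector_derivative)
  qed simp
  have "L * (m / (d + m * s)) \<le> Q m s" if "s \<in> {0..1}" for s
    using Q_ge_inverse_linear[OF assms that] unfolding L_def d_def .
  moreover have "Q m integrable_on {0..1}"
    using integrable_on_subinterval[OF Q_integrable[OF m assms(3,4)]] by simp
  ultimately have "L * ln (d + m * 1) - L * ln (d + m * 0) \<le> integral {0..1} (Q m)"
    using has_integral_le[OF log_int integrable_integral] by blast
  then have "L * (ln (d + m) - ln d) \<le> integral {0..1} (Q m)"
    by (simp add: algebra_simps)
  also have "integral {0..1} (Q m) \<le> integral {-1..0} (Q m) + integral {0..1} (Q m)"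
    using integrable_on_subinterval[OF Q_integrable[OF m assms(3,4)]] Q_pos[OF m] Y_bounds[OF m assms(3,4)]
    by (intro add_increasing integral_nonneg) (auto intro: less_imp_le)
  also have "\<dots> = T m"
    unfolding T_def using Q_integrable[OF m assms(3,4)]
    by (simp add: Henstock_Kurzweil_Integration.integral_combine)
  finally show ?thesis unfolding L_def d_def .
qed

lemma isCont_T_bound_0: "isCont T_bound 0"
proof -
  have "k_lower 0 > 0" unfolding k_lower_def using a_gt_1 by (auto intro!: divide_pos_pos)
  then have sqrt_gt_1: "1 < sqrt (1 + 2 * k_lower 0)" by simp
  moreover have "-1 < 1 / g \<and> 1 / g < 1" if "1 < g" for g :: real
    using that by (auto simp: divide_simps)
  ultimately have arg: "-1 < 1 / sqrt (1 + 2 * k_lower 0)" "1 / sqrt (1 + 2 * k_lower 0) < 1"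
    by blast+
  have "isCont k_lower 0"
    unfolding k_lower_def[abs_def] using a_gt_1 by (intro continuous_intros) auto
  then have "isCont (\<lambda>W. 1 / sqrt (1 + 2 * k_lower W)) 0"
    using sqrt_gt_1 by (intro continuous_intros) auto
  then have "isCont (\<lambda>W. arcsin (1 / sqrt (1 + 2 * k_lower W))) 0"
    using arg by (intro isCont_o2[OF _ isCont_arcsin])
  then show ?thesis
    unfolding T_bound_def[abs_def] using a_gt_1 by (intro continuous_intros) auto
qed

lemma T_bound_0: "T_bound 0 = 2 * c * arcsin (sqrt ((a + 1) / (2 * a))) / sqrt (a\<^sup>2 - 1)"
proof -
  have "1 / sqrt (1 + 2 * k_lower 0) = sqrt ((a + 1) / (2 * a))"
  proof -
    have "1 + 2 * k_lower 0 = 2 * a / (1 + a)" unfolding k_lower_def using a_gt_1 by (simp add: field_simps)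
    then show ?thesis using a_gt_1 by (simp add: real_sqrt_divide)
  qed
  moreover have "sqrt (2 * k_upper) / (a - 1) = 1 / sqrt (a\<^sup>2 - 1)"
  proof -
    have "2 * k_upper = (a - 1) / (a + 1)"
      unfolding k_upper_def using a_gt_1 by (simp add: field_simps)
    then have "sqrt (2 * k_upper) = sqrt (a - 1) / sqrt (a + 1)"
      by (simp add: real_sqrt_divide)
    moreover have "sqrt (a\<^sup>2 - 1) = sqrt (a - 1) * sqrt (a + 1)"
      by (simp add: power2_eq_square algebra_simps flip: real_sqrt_mult)
    moreover have "a - 1 = sqrt (a - 1) * sqrt (a - 1)" "sqrt (a - 1) > 0" "sqrt (a + 1) > 0"
      using a_gt_1 by auto
    ultimately show ?thesis by (simp add: field_simps)
  qed
  moreover have "T_bound 0 = c * (sqrt (2 * k_upper) / (a - 1)) * (2 * arcsin (1 / sqrt (1 + 2 * k_lower 0)))"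
    unfolding T_bound_def by simp
  ultimately show ?thesis by simp
qed

lemma eventually_T_lt_1:
  assumes "T_bound 0 < 1"
  shows "\<forall>\<^sub>F m in at_right 0. T m < 1"
proof -
  have "\<forall>\<^sub>F W0 in at_right 0. T_bound W0 < 1"
    using order_tendstoD(2)[OF tendsto_mono[OF at_le isCont_T_bound_0[unfolded isCont_def]] assms]
    by simp
  moreover have "\<forall>\<^sub>F W0 in at_right 0. W0 \<in> {0<..<a - 1}"
    using a_gt_1 by (intro eventually_at_right_real) simp
  ultimately have "\<exists>W0. T_bound W0 < 1 \<and> W0 \<in> {0<..<a - 1}"
    by (intro eventually_happens'[OF trivial_limit_at_right_real] eventually_conj)
  then obtain W0 where W0: "T_bound W0 < 1" "0 < W0" "W0 < a - 1" by auto
  have "(E \<longlongrightarrow> E 0) (at_right 0)"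
    using tendsto_mono[OF at_le isCont_E[of 0, unfolded isCont_def]] a_gt_1 by simp
  then have "\<forall>\<^sub>F m in at_right 0. E m < F W0"
    using order_tendstoD(2) F_pos[of W0] W0 by simp
  moreover have "\<forall>\<^sub>F m in at_right 0. m \<in> {0<..<a - 1}"
    using a_gt_1 by (intro eventually_at_right_real) simp
  ultimately show ?thesis
  proof eventually_elim
    case (elim m)
    then have "T m \<le> T_bound W0" using W0 by (intro T_le_T_bound) auto
    with W0 show ?case by simp
  qed
qed

lemma eventually_T_gt_1:
  assumes ms: "0 < ms" "ms < a - 1" "E ms = Fmax"
  shows "\<forall>\<^sub>F m in at_left ms. 1 < T m"
proof -
  define l where "l = ms / 2"
  define L where "L = c * sqrt (l / (4 * a))"
  define \<delta> where "\<delta> = l * exp (- 1 / L)"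
  have l: "0 < l" "l < ms" unfolding l_def using ms by auto
  have L: "L > 0" unfolding L_def using l a_gt_1 c_pos by auto
  have \<delta>: "\<delta> > 0" unfolding \<delta>_def using l by simp
  have "(E \<longlongrightarrow> Fmax) (at_left ms)"
    using tendsto_mono[OF at_le isCont_E[of ms, unfolded isCont_def]] ms a_gt_1 by simp
  then have "\<forall>\<^sub>F m in at_left ms. Fmax - \<delta>\<^sup>2 < E m"
    by (rule order_tendstoD(1)) (use \<delta> in simp)
  moreover have "\<forall>\<^sub>F m in at_left ms. m \<in> {l<..<ms}"
    using l by (intro eventually_at_left_real)
  ultimately show ?thesis
  proof eventually_elim
    case (elim m)
    then have m: "l < m" "m < ms" by auto
    have E_lt: "E m < Fmax"
      using strict_mono_onD[OF strict_mono_on_E, of m ms] m l ms by simp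
    define d where "d = sqrt (Fmax - E m)"
    have d: "0 < d" "d < \<delta>"
      unfolding d_def using E_lt elim \<delta> real_sqrt_less_mono[of "Fmax - E m" "\<delta>\<^sup>2"] by auto
    have "ln (d + m) - ln d > ln l - ln \<delta>"
      using d m l by (smt (verit) ln_less_cancel_iff)
    also have "ln l - ln \<delta> = 1 / L"
      unfolding \<delta>_def using l by (simp add: ln_mult)
    finally have "1 < L * (ln (d + m) - ln d)"
      using L by (simp add: field_simps)
    also have "\<dots> \<le> T m"
      using T_ge_log[of l m] l m ms E_lt unfolding L_def d_def by simp
    finally show ?case .
  qed
qed

lemma T_eq_1:
  assumes "T_bound 0 < 1"
  obtains m where "0 < m" "m < a - 1" "E m < Fmax" "T m = 1"
proof -
  obtain ms where ms: "0 < ms" "ms < a - 1" "E ms = Fmax"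
    using E_reaches_Fmax by blast
  obtain m2 where m2: "1 < T m2" "m2 \<in> {0<..<ms}"
    using eventually_happens'[OF trivial_limit_at_left_real
        eventually_conj[OF eventually_T_gt_1[OF ms] eventually_at_left_real[OF ms(1)]]]
    by blast
  obtain m1 where m1: "T m1 < 1" "m1 \<in> {0<..<m2}"
    using eventually_happens'[OF trivial_limit_at_right_real
        eventually_conj[OF eventually_T_lt_1[OF assms] eventually_at_right_real]] m2
    by fastforce
  have E_m2: "E m2 < Fmax"
    using strict_mono_onD[OF strict_mono_on_E, of m2 ms] m2 ms by simp
  then obtain m where m: "m1 \<le> m" "m \<le> m2" "T m = 1"
    using IVT'[of T m1 1 m2] continuous_on_T[of m1 m2] m1 m2 ms by auto
  moreover have "E m \<le> E m2"
    using strict_mono_on_leD[OF strict_mono_on_E, of m m2] m m1 m2 ms by simp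
  ultimately show thesis
    using that[of m] m1 m2 ms E_m2 by simp
qed

lemma orbit_extends_beyond:
  assumes "0 < m" "m < a - 1" "E m < Fmax"
  obtains \<rho> where "1 < \<rho>" "\<And>s. \<bar>s\<bar> \<le> \<rho> \<Longrightarrow> 0 < Y m s \<and> Y m s < Fmax"
proof -
  define \<rho> where "\<rho> = sqrt (1 + F m / m\<^sup>2)"
  have Fm: "F m > 0" using F_pos assms by simp
  then have \<rho>: "1 < \<rho>" "m\<^sup>2 * \<rho>\<^sup>2 = m\<^sup>2 + F m"
    unfolding \<rho>_def using assms by (auto simp: field_simps add_pos_nonneg)
  have "0 < Y m s \<and> Y m s < Fmax" if "\<bar>s\<bar> \<le> \<rho>" for s
  proof
    have "s\<^sup>2 \<le> \<rho>\<^sup>2" using that abs_le_square_iff[of s \<rho>] \<rho> by simp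
    then have "m\<^sup>2 * s\<^sup>2 \<le> m\<^sup>2 + F m" using \<rho> by (metis mult_left_mono zero_le_power2)
    then show "0 < Y m s" using Fm unfolding Y_def E_def by simp
    have "0 \<le> m\<^sup>2 * s\<^sup>2" by simp
    then show "Y m s < Fmax" using assms unfolding Y_def by linarith
  qed
  with \<rho> show thesis using that by blast
qed

lemma time_reparametrization:
  assumes m: "0 < m" "m < a - 1" "E m < Fmax" and T: "T m = 1"
  obtains \<sigma> where "\<sigma> 0 = -1" "\<sigma> 1 = 1"
    "\<And>x. x \<in> {0..1} \<Longrightarrow> 0 < Y m (\<sigma> x) \<and> Y m (\<sigma> x) < Fmax"
    "\<And>x. x \<in> {0..1} \<Longrightarrow> (\<sigma> has_real_derivative inverse (Q m (\<sigma> x))) (at x)"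
proof -
  obtain \<rho> where \<rho>: "1 < \<rho>" and Y_\<rho>: "\<And>s. \<bar>s\<bar> \<le> \<rho> \<Longrightarrow> 0 < Y m s \<and> Y m s < Fmax"
    using orbit_extends_beyond[OF m] by blast
  have "continuous_on {-\<rho>..\<rho>} (Q m)"
    using m Y_\<rho> by (intro continuous_on_Q_slice) auto
  moreover have "\<And>s. s \<in> {-\<rho>..\<rho>} \<Longrightarrow> 0 < Q m s"
    using Q_pos[OF m(1)] Y_\<rho> by auto
  ultimately obtain \<sigma> where "\<sigma> 0 = -1" "\<sigma> 1 = 1" "\<And>x. x \<in> {0..1} \<Longrightarrow> \<sigma> x \<in> {-\<rho><..<\<rho>}"
    "\<And>x. x \<in> {0..1} \<Longrightarrow> (\<sigma> has_real_derivative inverse (Q m (\<sigma> x))) (at x)"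
    using inverse_of_primitive[OF \<rho>] T unfolding T_def by metis
  with Y_\<rho> show thesis
    using that[of \<sigma>] by force
qed

lemma orbit_equations:
  assumes m: "0 < m" and Y: "0 < Y m (\<sigma> x)" "Y m (\<sigma> x) < Fmax"
    and d\<sigma>: "(\<sigma> has_real_derivative inverse (Q m (\<sigma> x))) (at x)"
  obtains w' z' where "((\<lambda>t. W m (\<sigma> t)) has_real_derivative w') (at x)"
    "((\<lambda>t. m * \<sigma> t) has_real_derivative z') (at x)"
    "c * w' = - (m * \<sigma> x) * (W m (\<sigma> x) + 1 + a) / (1 + W m (\<sigma> x))"
    "c * z' = W m (\<sigma> x) * (a - 1 - W m (\<sigma> x)) / (1 + W m (\<sigma> x))"
proof
  have "(Y m has_real_derivative - (m\<^sup>2 * \<sigma> x)) (at (\<sigma> x))"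
    unfolding Y_def[abs_def] by (auto intro!: derivative_eq_intros)
  from DERIV_chain2[OF Finv_deriv[OF Y] DERIV_chain2[OF this d\<sigma>]]
  show "((\<lambda>t. W m (\<sigma> t)) has_real_derivative
          inverse (F' (W m (\<sigma> x))) * (- (m\<^sup>2 * \<sigma> x) * inverse (Q m (\<sigma> x)))) (at x)"
    unfolding W_def by simp
  show "((\<lambda>t. m * \<sigma> t) has_real_derivative m * inverse (Q m (\<sigma> x))) (at x)"
    by (auto intro!: derivative_eq_intros d\<sigma>)
  show "c * (inverse (F' (W m (\<sigma> x))) * (- (m\<^sup>2 * \<sigma> x) * inverse (Q m (\<sigma> x))))
          = - (m * \<sigma> x) * (W m (\<sigma> x) + 1 + a) / (1 + W m (\<sigma> x))"
    and "c * (m * inverse (Q m (\<sigma> x))) = W m (\<sigma> x) * (a - 1 - W m (\<sigma> x)) / (1 + W m (\<sigma> x))"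
    using W_bounds[OF Y] m c_pos unfolding Q_def F'_def
    by (simp_all add: divide_simps power2_eq_square)
qed

lemma stationary_solution_exists:
  assumes m: "0 < m" "m < a - 1" "E m < Fmax" and T: "T m = 1"
  shows "\<exists>u v :: real \<Rightarrow> real.
           (\<forall>x\<in>{0..1}. 1 + u x + v x \<noteq> 0) \<and>
           (\<forall>x\<in>{0..1}. ((\<lambda>y. c * u y) has_real_derivative
                (a * v x / (1 + u x + v x) - u x)) (at x within {0..1})) \<and>
           (\<forall>x\<in>{0..1}. ((\<lambda>y. - (c * v y)) has_real_derivative
                (a * u x / (1 + u x + v x) - v x)) (at x within {0..1})) \<and>
           u 0 = 0 \<and> v 1 = 0 \<and>
           (\<exists>x\<in>{0..1}. u x \<noteq> 0 \<or> v x \<noteq> 0)"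
proof -
  obtain \<sigma> where \<sigma>: "\<sigma> 0 = -1" "\<sigma> 1 = 1"
    "\<And>x. x \<in> {0..1} \<Longrightarrow> 0 < Y m (\<sigma> x) \<and> Y m (\<sigma> x) < Fmax"
    "\<And>x. x \<in> {0..1} \<Longrightarrow> (\<sigma> has_real_derivative inverse (Q m (\<sigma> x))) (at x)"
    using time_reparametrization[OF m T] by blast
  define u where "u t = (W m (\<sigma> t) + m * \<sigma> t) / 2" for t
  define v where "v t = (W m (\<sigma> t) - m * \<sigma> t) / 2" for t
  have ode: "1 + u x + v x \<noteq> 0 \<and>
      ((\<lambda>y. c * u y) has_real_derivative a * v x / (1 + u x + v x) - u x) (at x) \<and>
      ((\<lambda>y. - (c * v y)) has_real_derivative a * u x / (1 + u x + v x) - v x) (at x)"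
    if x: "x \<in> {0..1}" for x
  proof -
    have Y: "0 < Y m (\<sigma> x)" "Y m (\<sigma> x) < Fmax" using \<sigma>(3)[OF x] by auto
    then have "1 + W m (\<sigma> x) \<noteq> 0" using W_bounds by force
    moreover have "1 + u x + v x = 1 + W m (\<sigma> x)"
      unfolding u_def v_def by (simp add: field_simps)
    moreover obtain w' z' where "((\<lambda>t. W m (\<sigma> t)) has_real_derivative w') (at x)"
      "((\<lambda>t. m * \<sigma> t) has_real_derivative z') (at x)"
      "c * w' = - (m * \<sigma> x) * (W m (\<sigma> x) + 1 + a) / (1 + W m (\<sigma> x))"
      "c * z' = W m (\<sigma> x) * (a - 1 - W m (\<sigma> x)) / (1 + W m (\<sigma> x))"
      using orbit_equations[OF m(1) Y \<sigma>(4)[OF x]] .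
    ultimately show ?thesis
      using system_from_sum_difference[of "\<lambda>t. W m (\<sigma> t)" _ x "\<lambda>t. m * \<sigma> t"]
      unfolding u_def[abs_def] v_def[abs_def] by simp
  qed
  have "W m (-1) = m" "W m 1 = m"
    unfolding W_def Y_def E_def using Finv_F[of m] m by auto
  then have "u 0 = 0" "v 1 = 0" "u 1 \<noteq> 0"
    unfolding u_def v_def using \<sigma> m by auto
  with ode show ?thesis
    by (intro exI[of _ u] exI[of _ v]) (auto intro: has_field_derivative_at_within)
qed

end

lemma cos_second_quadrant:
  assumes "b \<in> {pi/2<..<pi}"
  shows "-1 < cos b" "cos b < 0"
proof -
  show "cos b < 0"
    using assms cos_gt_zero_pi[of "pi - b"] by (auto simp: cos_pi_minus)
  have "sin b > 0" using assms by (intro sin_gt_zero) auto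
  then have "(cos b)\<^sup>2 < 1" using sin_cos_squared_add[of b] by (smt (verit) zero_less_power)
  then show "-1 < cos b" by (simp add: abs_square_less_1)
qed

lemma double_arcsin_lt:
  assumes b: "b \<in> {pi/2<..<pi}" and a: "a > 1 / \<bar>cos b\<bar>"
  shows "2 * arcsin (sqrt ((a + 1) / (2 * a))) < b"
proof -
  have cos: "-1 < cos b" "cos b < 0" using cos_second_quadrant[OF b] by auto
  then have "1 < a * - cos b" using a by (simp add: field_simps)
  moreover have a_pos: "a > 0" using a cos by (smt (verit) divide_pos_pos)
  ultimately have "(a + 1) / (2 * a) < (1 - cos b) / 2"
    by (simp add: field_simps)
  also have "\<dots> = (sin (b / 2))\<^sup>2"
    using cos_double_sin[of "b / 2"] by simp
  finally have "(a + 1) / (2 * a) < (sin (b / 2))\<^sup>2" .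
  moreover have "sin (b / 2) > 0" using b by (intro sin_gt_zero) auto
  ultimately have "sqrt ((a + 1) / (2 * a)) < sin (b / 2)"
    by (intro real_less_lsqrt) auto
  moreover have "0 \<le> (a + 1) / (2 * a)" using a_pos by simp
  then have "-1 \<le> sqrt ((a + 1) / (2 * a))"
    using real_sqrt_ge_zero[of "(a + 1) / (2 * a)"] by linarith
  ultimately have "arcsin (sqrt ((a + 1) / (2 * a))) < arcsin (sin (b / 2))"
    by (intro arcsin_less_arcsin) auto
  also have "arcsin (sin (b / 2)) = b / 2"
    using b by (intro arcsin_sin) auto
  finally show ?thesis by simp
qed

lemma tan_root_lt_sqrt:
  assumes b: "b \<in> {pi/2<..<pi}" and root: "c * b + tan b = 0" and a: "a > 1 / \<bar>cos b\<bar>"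
  shows "c * b < sqrt (a\<^sup>2 - 1)"
proof -
  have cos: "-1 < cos b" "cos b < 0" using cos_second_quadrant[OF b] by auto
  have sin: "sin b > 0" using b by (intro sin_gt_zero) auto
  have "c * b = sin b / - cos b"
    using root cos unfolding tan_def by (simp add: field_simps)
  also have "\<dots> = sqrt ((1 / cos b)\<^sup>2 - 1)"
  proof -
    have "(1 / cos b)\<^sup>2 - 1 = (sin b / - cos b)\<^sup>2"
      using sin_cos_squared_add[of b] cos by (simp add: field_simps)
    then show ?thesis using sin cos by simp
  qed
  also have "\<dots> < sqrt (a\<^sup>2 - 1)"
  proof -
    have "\<bar>1 / cos b\<bar> < \<bar>a\<bar>" using a cos by simp
    then have "(1 / cos b)\<^sup>2 < a\<^sup>2" using abs_le_square_iff[of a "1 / cos b"] by linarith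
    then show ?thesis by simp
  qed
  finally show ?thesis .
qed

theorem mainTheorem7:
  fixes c b0 \<alpha> :: real
  assumes c_pos: "c > 0"
    and b0_range: "b0 \<in> {pi/2<..<pi}"
    and b0_sol: "c * b0 + tan b0 = 0"
    and b0_min: "\<forall>b. 0 < b \<and> b < b0 \<longrightarrow> c * b + tan b \<noteq> 0"
    and alpha_gt: "\<alpha> > 1 / \<bar>cos b0\<bar>"
  shows "\<exists>u v :: real \<Rightarrow> real.
           (\<forall>x\<in>{0..1}. 1 + u x + v x \<noteq> 0) \<and>
           (\<forall>x\<in>{0..1}. ((\<lambda>y. c * u y) has_real_derivative
                (\<alpha> * v x / (1 + u x + v x) - u x)) (at x within {0..1})) \<and>
           (\<forall>x\<in>{0..1}. ((\<lambda>y. - (c * v y)) has_real_derivative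
                (\<alpha> * u x / (1 + u x + v x) - v x)) (at x within {0..1})) \<and>
           u 0 = 0 \<and> v 1 = 0 \<and>
           (\<exists>x\<in>{0..1}. u x \<noteq> 0 \<or> v x \<noteq> 0)"
proof -
  have "1 < 1 / \<bar>cos b0\<bar>"
    using cos_second_quadrant[OF b0_range] by (simp add: divide_simps)
  with alpha_gt interpret stationary_system \<alpha> c
    using c_pos by unfold_locales simp
  have "sqrt (\<alpha>\<^sup>2 - 1) > 0" using a_gt_1 by simp
  moreover have "c * (2 * arcsin (sqrt ((\<alpha> + 1) / (2 * \<alpha>)))) < sqrt (\<alpha>\<^sup>2 - 1)"
    using double_arcsin_lt[OF b0_range alpha_gt] tan_root_lt_sqrt[OF b0_range b0_sol alpha_gt] c_pos
    by (smt (verit) mult_strict_left_mono)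
  ultimately have "T_bound 0 < 1" unfolding T_bound_0 by simp
  then obtain m where "0 < m" "m < \<alpha> - 1" "E m < Fmax" "T m = 1"
    by (rule T_eq_1)
  then show ?thesis by (rule stationary_solution_exists)
qed

end
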